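(* Let $g\ge1$, $n\ge3$, $k\in\{1,\dots,n\}$, and let $y\in A_g^n$ be a point at which $f_k$ attains its minimum on $A_g^n$. Then $y=y(g,n,i_0)$ for some $i_0\le k$.
   Context: For $g,n\ge1$, $A_g^n\subseteq\mathbb{R}^n$ is the set of $(x_1,\dots,x_n)$ with $x_1\ge\dots\ge x_n\ge0$, $x_1+\dots+x_n=1/g$, and $x_1\cdots x_k\le g(x_{k+1}+\dots+x_n)$ for all $k=1,\dots,n-1$. $f_k(x)=x_1\cdots x_k$ on $A_g^n$. Sylvester sequences: $s_{g,1}=g+1$, $s_{g,k+1}=s_{g,k}(s_{g,k}-1)+1$, $t_{g,k}=s_{g,k}-1$. For $1\le k\le n$, $y(g,n,k)=\big(\tfrac1{s_{g,1}},\dots,\tfrac1{s_{g,k-1}},\tfrac{1}{(n-k+1)t_{g,k}},\dots,\tfrac{1}{(n-k+1)t_{g,k}}\big)\in A_g^n$, the last entry repeated $n-k+1$ times. *)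

theory Defs
  imports "HOL-Analysis.Analysis"
begin

(* Points of R^n are represented as lists of reals of length n;
   the paper's coordinate x_i (1-based) is  x ! (i - 1). *)

definition A :: "nat \<Rightarrow> nat \<Rightarrow> real list set" where
  "A g n = {x. length x = n
     \<and> (\<forall>i. i + 1 < n \<longrightarrow> x ! i \<ge> x ! (i + 1))
     \<and> x ! (n - 1) \<ge> 0
     \<and> sum_list x = 1 / real g
     \<and> (\<forall>k. 1 \<le> k \<and> k \<le> n - 1 \<longrightarrow>
           prod_list (take k x) \<le> real g * sum_list (drop k x))}"

definition f :: "nat \<Rightarrow> real list \<Rightarrow> real" where
  "f k x = prod_list (take k x)"

(* Sylvester sequence: s g 1 = g + 1, s g (k+1) = s g k * (s g k - 1) + 1 *)
fun s :: "nat \<Rightarrow> nat \<Rightarrow> nat" where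
  "s g 0 = g"
| "s g (Suc 0) = g + 1"
| "s g (Suc (Suc k)) = s g (Suc k) * (s g (Suc k) - 1) + 1"

definition t :: "nat \<Rightarrow> nat \<Rightarrow> nat" where
  "t g k = s g k - 1"

definition y :: "nat \<Rightarrow> nat \<Rightarrow> nat \<Rightarrow> real list" where
  "y g n k = map (\<lambda>i. 1 / real (s g (i + 1))) [0..<k - 1]
             @ replicate (n - k + 1) (1 / (real (n - k + 1) * real (t g k)))"

end

theory Submission
  imports Defs
begin

text \<open>
  Let p minimize f_k on A_g^n; a constant p equals y(g,n,1). Otherwise consider the
  perturbations p + e v with small e > 0, sum v = 0 and v antitone wherever p is constant:
  they stay in A_g^n unless they break a tight constraint, and none of them decreases f_k.
  Moving mass from the last plateau of p to the first shows that the last plateau starts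
  before k. If no constraint were tight, p + e v and p - e v would both be admissible,
  although (p_i + e v_i)(p_i - e v_i) < p_i^2. If the first constraint were slack, moving
  mass from x_(m-1) to x_1, where m is the first tight constraint, would decrease f_k.
  Hence x_1 = 1/(g+1), and the tail of p minimizes f_(k-1) on A_(g(g+1))^(n-1); since
  s_(g(g+1),j) = s_(g,j+1), induction on n concludes.
\<close>

lemma prod_strict_mono_ex1:
  fixes a b :: "'a \<Rightarrow> real"
  assumes "finite I" "\<And>i. i \<in> I \<Longrightarrow> 0 < a i" "\<And>i. i \<in> I \<Longrightarrow> a i \<le> b i"
    and "j \<in> I" "a j < b j"
  shows "prod a I < prod b I"
proof -
  have "prod a I = a j * prod a (I - {j})" using assms by (simp add: prod.remove)
  also have "\<dots> \<le> a j * prod b (I - {j})"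
    using assms by (intro mult_left_mono prod_mono) (auto intro: less_imp_le)
  also have "\<dots> < b j * prod b (I - {j})"
    using assms by (intro mult_strict_right_mono prod_pos) (force intro: less_le_trans)+
  also have "\<dots> = prod b I" using assms by (simp add: prod.remove)
  finally show ?thesis .
qed

lemma prod_lessThan_antimono:
  fixes p :: "nat \<Rightarrow> real"
  assumes "\<And>i. i < j' \<Longrightarrow> 0 \<le> p i \<and> p i \<le> 1" "j \<le> j'"
  shows "(\<Prod>i<j'. p i) \<le> (\<Prod>i<j. p i)"
proof -
  have "{..<j'} = {..<j} \<union> {j..<j'}" using assms(2) by auto
  then have "(\<Prod>i<j'. p i) = (\<Prod>i<j. p i) * (\<Prod>i\<in>{j..<j'}. p i)"
    by (metis prod.union_disjoint finite_lessThan finite_atLeastLessThan ivl_disj_int_one(2))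
  also have "\<dots> \<le> (\<Prod>i<j. p i)"
    using assms by (intro mult_left_le prod_le_1 prod_nonneg) auto
  finally show ?thesis .
qed

lemma prod_spread_less:
  fixes p :: "'a \<Rightarrow> real"
  assumes "finite I" "a \<in> I" "b \<in> I" "a \<noteq> b" "p b \<le> p a" "0 < e" "\<And>i. i \<in> I \<Longrightarrow> 0 < p i"
  shows "(\<Prod>i\<in>I. (p(a := p a + e, b := p b - e)) i) < (\<Prod>i\<in>I. p i)"
proof -
  define R where "R = (\<Prod>i\<in>I - {a, b}. p i)"
  have I: "I = insert a (insert b (I - {a, b}))" using assms by auto
  have "(\<Prod>i\<in>I. (p(a := p a + e, b := p b - e)) i) = (p a + e) * (p b - e) * R"
    "(\<Prod>i\<in>I. p i) = p a * p b * R"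
    unfolding R_def by (subst I, use assms in \<open>simp add: prod.insert_remove\<close>)+
  moreover have "(p a + e) * (p b - e) = p a * p b - e * (p a - p b) - e * e"
    by (simp add: algebra_simps)
  moreover have "0 \<le> e * (p a - p b)" "0 < e * e" using assms(5,6) by simp_all
  moreover have "0 < R" unfolding R_def using assms by (intro prod_pos) auto
  ultimately show ?thesis by simp
qed

lemma eventually_less_at_right_0:
  fixes F G :: "real \<Rightarrow> real"
  assumes "continuous (at_right 0) (\<lambda>e. G e - F e)" "F 0 < G 0"
  shows "\<forall>\<^sub>F e in at_right 0. F e < G e"
  using order_tendstoD(1)[OF assms(1)[unfolded continuous_within], of 0] assms(2)
  by (auto elim: eventually_mono)

lemma one_div_diff_one_div_succ: "0 < x \<Longrightarrow> 1 / x - 1 / (x + 1) = 1 / (x * (x + 1))"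
  for x :: real
  by (simp add: field_simps)

lemma of_nat_mult_Suc: "real (g * (g + 1)) = real g * (real g + 1)"
  by (simp add: algebra_simps)

lemma s_mult_Suc: "s (g * (g + 1)) (Suc j) = s g (Suc (Suc j))"
  by (induction j) (simp_all add: algebra_simps)

lemma t_mult_Suc: "1 \<le> i \<Longrightarrow> t (g * (g + 1)) i = t g (Suc i)"
  using s_mult_Suc[of g "i - 1"] by (simp add: t_def)

lemma y_Suc:
  assumes "1 \<le> i" "i \<le> n"
  shows "y g (Suc n) (Suc i) = 1 / (real g + 1) # y (g * (g + 1)) n i"
proof -
  have "[0..<i] = 0 # map Suc [0..<i - 1]" using assms by (simp add: upt_conv_Cons map_Suc_upt)
  \<comment> \<open>the simplifier normalises \<open>g * (g + 1)\<close> to \<open>g + g * g\<close>, hence the simplified shift lemmas\<close>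
  then show ?thesis
    using assms s_mult_Suc[simplified] t_mult_Suc[simplified] by (simp add: y_def)
qed

lemma y_1: "1 \<le> n \<Longrightarrow> y g n 1 = replicate n (1 / (real n * real g))"
  by (cases n) (simp_all add: y_def t_def)

definition A_seq :: "nat \<Rightarrow> nat \<Rightarrow> (nat \<Rightarrow> real) \<Rightarrow> bool" where
  "A_seq g n p \<longleftrightarrow> (\<forall>i. i + 1 < n \<longrightarrow> p (i + 1) \<le> p i) \<and> 0 \<le> p (n - 1)
     \<and> (\<Sum>i<n. p i) = 1 / real g
     \<and> (\<forall>j. 1 \<le> j \<and> j \<le> n - 1 \<longrightarrow> (\<Prod>i<j. p i) \<le> real g * (\<Sum>i\<in>{j..<n}. p i))"

lemma prod_list_take_map_upt:
  "j \<le> n \<Longrightarrow> prod_list (take j (map p [0..<n])) = (\<Prod>i<j. p i)"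
  by (simp add: take_map min_def atLeast0LessThan flip: prod.distinct_set_conv_list)

lemma sum_list_drop_map_upt: "sum_list (drop j (map p [0..<n])) = (\<Sum>i\<in>{j..<n}. p i)"
  by (simp add: drop_map flip: sum.distinct_set_conv_list)

lemma map_upt_in_A_iff: "1 \<le> n \<Longrightarrow> map p [0..<n] \<in> A g n \<longleftrightarrow> A_seq g n p"
  using sum_list_drop_map_upt[of 0 p n]
  by (auto simp: A_def A_seq_def prod_list_take_map_upt sum_list_drop_map_upt atLeast0LessThan)

lemma f_map_upt: "k \<le> n \<Longrightarrow> f k (map p [0..<n]) = (\<Prod>i<k. p i)"
  unfolding f_def by (rule prod_list_take_map_upt)

lemma A_seq_step: "A_seq g n p \<Longrightarrow> i + 1 < n \<Longrightarrow> p (i + 1) \<le> p i"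
  by (simp add: A_seq_def)

lemma A_seq_antimono:
  assumes "A_seq g n p" "i \<le> j" "j < n"
  shows "p j \<le> p i"
  using assms(2,3)
proof (induction j rule: dec_induct)
  case (step j)
  then show ?case using A_seq_step[OF assms(1), of j] by simp
qed simp

lemma A_seq_nonneg: "A_seq g n p \<Longrightarrow> i < n \<Longrightarrow> 0 \<le> p i"
  using A_seq_antimono[of g n p i "n - 1"] unfolding A_seq_def by fastforce

lemma A_seq_pos:
  assumes p: "A_seq g n p" and "g \<ge> 1" "i < n"
  shows "0 < p i"
proof (rule ccontr)
  assume "\<not> 0 < p i"
  then have "p i = 0" using A_seq_nonneg[OF p \<open>i < n\<close>] by simp
  define j where "j = (LEAST j. p j = 0)"
  have "p j = 0" "j \<le> i"
    unfolding j_def using \<open>p i = 0\<close> by (auto intro: LeastI Least_le)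
  have below: "0 < p l" if "l < j" for l
    using not_less_Least[of l "\<lambda>j. p j = 0"] A_seq_nonneg[OF p, of l] that \<open>j \<le> i\<close> \<open>i < n\<close>
    unfolding j_def by fastforce
  have tail: "(\<Sum>l\<in>{j..<n}. p l) = 0"
    using A_seq_antimono[OF p] A_seq_nonneg[OF p] \<open>p j = 0\<close>
    by (intro sum.neutral) (metis atLeastLessThan_iff order.antisym)
  show False
  proof (cases "j = 0")
    case True
    then show False using tail p \<open>g \<ge> 1\<close> by (simp add: A_seq_def atLeast0LessThan)
  next
    case False
    then have "(\<Prod>l<j. p l) \<le> real g * (\<Sum>l\<in>{j..<n}. p l)"
      using p \<open>j \<le> i\<close> \<open>i < n\<close> by (simp add: A_seq_def)
    moreover have "0 < (\<Prod>l<j. p l)" using below by (intro prod_pos) auto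
    ultimately show False using tail by simp
  qed
qed

lemma A_seq_constraint:
  "A_seq g n p \<Longrightarrow> 1 \<le> j \<Longrightarrow> j \<le> n - 1 \<Longrightarrow> (\<Prod>i<j. p i) \<le> real g * (\<Sum>i\<in>{j..<n}. p i)"
  by (simp add: A_seq_def)

lemma A_seq_le_1: "A_seq g n p \<Longrightarrow> 1 \<le> g \<Longrightarrow> i < n \<Longrightarrow> p i \<le> 1"
  using member_le_sum[of i "{..<n}" p] A_seq_nonneg[of g n p]
  by (auto simp: A_seq_def intro: order_trans[OF _ divide_le_eq_1_pos[THEN iffD2]])

lemma A_seq_uniform:
  assumes p: "A_seq g n p" and "1 \<le> n" "p (n - 1) = p 0"
  shows "map p [0..<n] = y g n 1"
proof -
  have const: "p i = p 0" if "i < n" for i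
    using A_seq_antimono[OF p, of 0 i] A_seq_antimono[OF p, of i "n - 1"] that assms(3) by simp
  have "(\<Sum>i<n. p i) = (\<Sum>i<n. p 0)"
    by (intro sum.cong refl const) simp
  then have "real n * p 0 = 1 / real g"
    using p by (simp add: A_seq_def)
  then have "p 0 = 1 / (real n * real g)"
    using \<open>1 \<le> n\<close> by (simp add: eq_divide_eq mult.commute flip: divide_divide_eq_left)
  moreover have "map p [0..<n] = map (\<lambda>_. p 0) [0..<n]"
    by (intro map_cong refl const) simp
  ultimately show ?thesis
    unfolding y_1[OF \<open>1 \<le> n\<close>] by (simp add: map_replicate_const)
qed

lemma A_seq_drop_at_first_tight:
  assumes p: "A_seq g n p" and g: "1 \<le> g" and m: "2 \<le> m" "m < n"
    and slack: "(\<Prod>i<m - 1. p i) < real g * (\<Sum>i\<in>{m - 1..<n}. p i)"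
    and tight: "(\<Prod>i<m. p i) = real g * (\<Sum>i\<in>{m..<n}. p i)"
  shows "p m < p (m - 1)"
proof (rule ccontr)
  assume "\<not> p m < p (m - 1)"
  then have eq: "p (m - 1) = p m" using A_seq_antimono[OF p, of "m - 1" m] m by simp
  define c where "c = p m"
  define S where "S = (\<Sum>i\<in>{m..<n}. p i)"
  define P where "P = (\<Prod>i<m - 1. p i)"
  have c: "0 < c" unfolding c_def using A_seq_pos[OF p g] m by simp
  have "{..<m} = insert (m - 1) {..<m - 1}" "{m - 1..<n} = insert (m - 1) {m..<n}"
    using m by auto
  then have "real g * S = P * c" "P < real g * (c + S)"
    using tight slack eq m unfolding P_def S_def c_def by (simp_all add: mult.commute)
  then have "real g * S < real g * (c + S) * c" using c by simp
  then have lt: "S < (c + S) * c" using g by simp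
  have "c \<le> S" unfolding c_def S_def using A_seq_nonneg[OF p] m by (intro member_le_sum) auto
  have "(\<Sum>i\<in>{m - 1, m}. p i) \<le> (\<Sum>i<n. p i)"
    using A_seq_nonneg[OF p] m by (intro sum_mono2) auto
  then have "2 * c \<le> 1 / real g" using p m eq unfolding c_def A_seq_def by simp
  also have "\<dots> \<le> 1" using g by simp
  finally have "c * c \<le> S * (1 - c)"
    using \<open>c \<le> S\<close> c by (intro order.trans[OF mult_left_mono mult_right_mono]) auto
  then show False using lt by (simp add: algebra_simps)
qed

lemma A_seq_tail:
  assumes p: "A_seq g (Suc n) p" and g: "1 \<le> g" and n: "1 \<le> n"
    and tight: "p 0 = real g * (\<Sum>i\<in>{1..<Suc n}. p i)"
  shows "p 0 = 1 / (real g + 1)" "A_seq (g * (g + 1)) n (\<lambda>i. p (Suc i))"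
proof -
  have tail: "(\<Sum>i\<in>{1..<Suc n}. p i) = (\<Sum>i<n. p (Suc i))"
    using sum.shift_bounds_Suc_ivl[of p 0 n] by (simp add: atLeast0LessThan)
  have "(\<Sum>i<Suc n. p i) = 1 / real g"
    using p by (simp only: A_seq_def)
  then have "p 0 + (\<Sum>i<n. p (Suc i)) = 1 / real g"
    by (simp only: sum.lessThan_Suc_shift)
  then have "p 0 = real g * (1 / real g - p 0)" using tight tail by simp
  then have "p 0 * (real g + 1) = 1" using g by (simp add: algebra_simps)
  then show p0: "p 0 = 1 / (real g + 1)" by (simp add: field_simps)
  have "(\<Sum>i<n. p (Suc i)) = 1 / (real g * (real g + 1))"
    using \<open>p 0 + _ = _\<close> one_div_diff_one_div_succ[of "real g"] g unfolding p0 by simp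
  moreover have "(\<Prod>i<j. p (Suc i)) \<le> real g * (real g + 1) * (\<Sum>i\<in>{j..<n}. p (Suc i))"
    if "1 \<le> j" "j \<le> n - 1" for j
  proof -
    have "(\<Prod>i<Suc j. p i) \<le> real g * (\<Sum>i\<in>{Suc j..<Suc n}. p i)"
      by (rule A_seq_constraint[OF p]) (use that in simp_all)
    then have "p 0 * (\<Prod>i<j. p (Suc i)) \<le> real g * (\<Sum>i\<in>{j..<n}. p (Suc i))"
      by (simp only: prod.lessThan_Suc_shift sum.shift_bounds_Suc_ivl)
    then show ?thesis using g unfolding p0 by (simp add: field_simps)
  qed
  ultimately show "A_seq (g * (g + 1)) n (\<lambda>i. p (Suc i))"
    using p n unfolding A_seq_def of_nat_mult_Suc by auto
qed

lemma A_seq_Cons_constraint: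
  assumes q: "A_seq (g * (g + 1)) n q" and g: "1 \<le> g" and j: "1 \<le> j" "j \<le> n"
  shows "(\<Prod>i<j. case_nat (1 / (real g + 1)) q i)
    \<le> real g * (\<Sum>i\<in>{j..<Suc n}. case_nat (1 / (real g + 1)) q i)"
proof -
  obtain j' where j': "j = Suc j'" using j by (cases j) auto
  have "(\<Prod>i<j'. q i) \<le> real g * (real g + 1) * (\<Sum>i\<in>{j'..<n}. q i)"
  proof (cases j')
    case 0
    then show ?thesis using q g unfolding A_seq_def of_nat_mult_Suc by (simp add: atLeast0LessThan)
  next
    case (Suc j'')
    show ?thesis
      by (rule A_seq_constraint[OF q, unfolded of_nat_mult_Suc]) (use Suc j' j in simp_all)
  qed
  then have "(\<Prod>i<j'. q i) / (real g + 1) \<le> real g * (\<Sum>i\<in>{j'..<n}. q i)"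
    by (simp add: divide_le_eq add_pos_nonneg algebra_simps)
  then show ?thesis
    unfolding j' by (simp only: prod.lessThan_Suc_shift sum.shift_bounds_Suc_ivl nat.case) simp
qed

lemma A_seq_Cons:
  assumes q: "A_seq (g * (g + 1)) n q" and g: "1 \<le> g" and n: "1 \<le> n"
  shows "A_seq g (Suc n) (case_nat (1 / (real g + 1)) q)"
proof -
  have sum_q: "(\<Sum>i<n. q i) = 1 / (real g * (real g + 1))"
    using q unfolding A_seq_def of_nat_mult_Suc by blast
  have "q 0 \<le> (\<Sum>i<n. q i)"
    using A_seq_nonneg[OF q] n by (intro member_le_sum) auto
  also have "\<dots> \<le> 1 / (real g + 1)"
    unfolding sum_q using g mult_right_mono[of 1 "real g" "real g + 1"] by (intro frac_le) auto
  finally have q0: "q 0 \<le> 1 / (real g + 1)" .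
  have "(\<Sum>i<Suc n. case_nat (1 / (real g + 1)) q i) = 1 / real g"
    using sum_q one_div_diff_one_div_succ[of "real g"] g
    by (simp add: sum.lessThan_Suc_shift del: sum.lessThan_Suc)
  then show ?thesis
    using q q0 n A_seq_Cons_constraint[OF q g] unfolding A_seq_def
    by (auto split: nat.split)
qed

definition perturb :: "(nat \<Rightarrow> real) \<Rightarrow> (nat \<Rightarrow> real) \<Rightarrow> real \<Rightarrow> nat \<Rightarrow> real" where
  "perturb p v e i = p i + e * v i"

lemma perturb_uminus: "perturb p (\<lambda>i. - v i) e = perturb p v (- e)"
  by (simp add: perturb_def fun_eq_iff)

definition transfer :: "nat \<Rightarrow> nat \<Rightarrow> nat \<Rightarrow> real" where
  "transfer a b i = (if i = a then 1 else 0) - (if i = b then 1 else 0)"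

lemma perturb_transfer: "a \<noteq> b \<Longrightarrow> perturb p (transfer a b) e = p(a := p a + e, b := p b - e)"
  by (auto simp: perturb_def transfer_def fun_eq_iff)

lemma sum_transfer: "a < n \<Longrightarrow> b < n \<Longrightarrow> (\<Sum>i<n. transfer a b i) = 0"
  by (simp add: transfer_def sum_subtractf)

lemma eventually_perturb_pos:
  assumes "\<And>i. i < n \<Longrightarrow> 0 < p i"
  shows "\<forall>\<^sub>F e in at_right 0. \<forall>i\<in>{..<n}. 0 < perturb p v e i"
  unfolding perturb_def
  by (intro eventually_ball_finite ballI eventually_less_at_right_0 continuous_intros) (auto simp: assms)

lemma eventually_perturb_antimono:
  assumes antimono: "\<And>i. i + 1 < n \<Longrightarrow> p (i + 1) \<le> p i"
    and plateau: "\<And>i. i + 1 < n \<Longrightarrow> p (i + 1) = p i \<Longrightarrow> v (i + 1) \<le> v i"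
  shows "\<forall>\<^sub>F e in at_right 0. \<forall>i\<in>{..<n}. i + 1 < n \<longrightarrow> perturb p v e (i + 1) \<le> perturb p v e i"
proof (intro eventually_ball_finite ballI)
  fix i
  show "\<forall>\<^sub>F e in at_right 0. i + 1 < n \<longrightarrow> perturb p v e (i + 1) \<le> perturb p v e i"
  proof (cases "i + 1 < n \<and> p (i + 1) = p i")
    case True
    then show ?thesis
      using plateau[of i] eventually_at_right_less[of "0::real"]
      by (auto simp: perturb_def elim!: eventually_mono intro!: mult_left_mono)
  next
    case False
    then have "i + 1 < n \<longrightarrow> p (i + 1) < p i"
      using antimono[of i] by auto
    moreover have "p (i + 1) < p i \<Longrightarrow>
        \<forall>\<^sub>F e in at_right 0. perturb p v e (i + 1) < perturb p v e i"
      unfolding perturb_def by (intro eventually_less_at_right_0 continuous_intros) simp_all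
    ultimately show ?thesis
      by (cases "i + 1 < n") (auto elim!: eventually_mono)
  qed
qed simp

lemma eventually_perturb_slack:
  "\<forall>\<^sub>F e in at_right 0. \<forall>j\<in>{1..n - 1}.
      (\<Prod>i<j. p i) < G * (\<Sum>i\<in>{j..<n}. p i) \<longrightarrow>
      (\<Prod>i<j. perturb p v e i) < G * (\<Sum>i\<in>{j..<n}. perturb p v e i)"
proof (intro eventually_ball_finite ballI impI)
  fix j
  show "\<forall>\<^sub>F e in at_right 0. (\<Prod>i<j. p i) < G * (\<Sum>i\<in>{j..<n}. p i) \<longrightarrow>
      (\<Prod>i<j. perturb p v e i) < G * (\<Sum>i\<in>{j..<n}. perturb p v e i)"
  proof (cases "(\<Prod>i<j. p i) < G * (\<Sum>i\<in>{j..<n}. p i)")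
    case True
    then have "\<forall>\<^sub>F e in at_right 0. (\<Prod>i<j. perturb p v e i) < G * (\<Sum>i\<in>{j..<n}. perturb p v e i)"
      unfolding perturb_def by (intro eventually_less_at_right_0 continuous_intros) simp_all
    then show ?thesis by (auto elim: eventually_mono)
  qed simp
qed simp

lemma eventually_A_seq_perturb:
  assumes p: "A_seq g n p" "0 < n" "\<And>i. i < n \<Longrightarrow> 0 < p i"
    and sum_v: "(\<Sum>i<n. v i) = 0"
    and plateau: "\<And>i. i + 1 < n \<Longrightarrow> p (i + 1) = p i \<Longrightarrow> v (i + 1) \<le> v i"
    and tight: "\<And>e j. 0 < e \<Longrightarrow> (\<And>i. i < n \<Longrightarrow> 0 < perturb p v e i) \<Longrightarrow> 1 \<le> j \<Longrightarrow> j \<le> n - 1 \<Longrightarrow>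
        (\<Prod>i<j. p i) = real g * (\<Sum>i\<in>{j..<n}. p i) \<Longrightarrow>
        (\<Prod>i<j. perturb p v e i) \<le> real g * (\<Sum>i\<in>{j..<n}. perturb p v e i)"
  shows "\<forall>\<^sub>F e in at_right 0. 0 < e \<and> A_seq g n (perturb p v e)"
proof -
  have "\<forall>\<^sub>F e in at_right 0. \<forall>i\<in>{..<n}. 0 < perturb p v e i"
    by (rule eventually_perturb_pos) (rule p(3))
  moreover have "\<forall>\<^sub>F e in at_right 0. \<forall>i\<in>{..<n}. i + 1 < n \<longrightarrow> perturb p v e (i + 1) \<le> perturb p v e i"
    by (rule eventually_perturb_antimono) (use A_seq_step[OF p(1)] plateau in auto)
  moreover have "\<forall>\<^sub>F e in at_right 0. \<forall>j\<in>{1..n - 1}.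
      (\<Prod>i<j. p i) < real g * (\<Sum>i\<in>{j..<n}. p i) \<longrightarrow>
      (\<Prod>i<j. perturb p v e i) < real g * (\<Sum>i\<in>{j..<n}. perturb p v e i)"
    by (rule eventually_perturb_slack)
  moreover have "\<forall>\<^sub>F e in at_right (0::real). 0 < e" by (rule eventually_at_right_less)
  ultimately show ?thesis
  proof eventually_elim
    case (elim e)
    have constraint: "(\<Prod>i<j. perturb p v e i) \<le> real g * (\<Sum>i\<in>{j..<n}. perturb p v e i)"
      if "1 \<le> j" "j \<le> n - 1" for j
    proof (cases "(\<Prod>i<j. p i) < real g * (\<Sum>i\<in>{j..<n}. p i)")
      case False
      then have "(\<Prod>i<j. p i) = real g * (\<Sum>i\<in>{j..<n}. p i)"
        using A_seq_constraint[OF p(1) that] by simp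
      then show ?thesis using tight[of e j] elim that by auto
    qed (use elim that in auto)
    have "(\<Sum>i<n. perturb p v e i) = (\<Sum>i<n. p i)"
      using sum_v by (simp add: perturb_def sum.distrib flip: sum_distrib_left)
    then show ?case
      using elim constraint p(1,2) unfolding A_seq_def
      by (auto intro: less_imp_le)
  qed
qed

lemma prod_perturb_pair_less:
  fixes p v :: "nat \<Rightarrow> real"
  assumes pos: "\<And>i. i < k \<Longrightarrow> 0 < perturb p v e i" "\<And>i. i < k \<Longrightarrow> 0 < perturb p v (- e) i"
    and "0 < k" "e \<noteq> 0" "v 0 \<noteq> 0"
  shows "(\<Prod>i<k. perturb p v e i) * (\<Prod>i<k. perturb p v (- e) i) < (\<Prod>i<k. p i) ^ 2"
proof -
  have factor: "perturb p v e i * perturb p v (- e) i = p i ^ 2 - (e * v i) ^ 2" for i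
    by (simp add: perturb_def algebra_simps power2_eq_square)
  have "(\<Prod>i<k. perturb p v e i) * (\<Prod>i<k. perturb p v (- e) i)
      = (\<Prod>i<k. p i ^ 2 - (e * v i) ^ 2)"
    by (simp add: factor flip: prod.distrib)
  also have "\<dots> < (\<Prod>i<k. p i ^ 2)"
  proof (rule prod_strict_mono_ex1[where j = 0])
    show "0 < p i ^ 2 - (e * v i) ^ 2" if "i \<in> {..<k}" for i
      using pos[of i] that by (simp flip: factor)
  qed (use assms in auto)
  finally show ?thesis by (simp add: prod_power_distrib)
qed

definition minimizer :: "nat \<Rightarrow> nat \<Rightarrow> nat \<Rightarrow> (nat \<Rightarrow> real) \<Rightarrow> bool" where
  "minimizer g n k p \<longleftrightarrow> A_seq g n p \<and> (\<forall>q. A_seq g n q \<longrightarrow> (\<Prod>i<k. p i) \<le> (\<Prod>i<k. q i))"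

lemma minimizer_two_sided_perturb:
  assumes min: "minimizer g n k p" and g: "1 \<le> g" and k: "0 < k" "k \<le> n"
    and plus: "A_seq g n (perturb p v e)" and minus: "A_seq g n (perturb p v (- e))"
    and "e \<noteq> 0" "v 0 \<noteq> 0"
  shows False
proof -
  have "0 < p i" if "i < n" for i
    using A_seq_pos[OF _ g that] min by (auto simp: minimizer_def)
  then have "0 \<le> (\<Prod>i<k. p i)" using k by (intro prod_nonneg) (auto intro: less_imp_le)
  moreover have "(\<Prod>i<k. p i) \<le> (\<Prod>i<k. perturb p v e i)" "(\<Prod>i<k. p i) \<le> (\<Prod>i<k. perturb p v (- e) i)"
    using min plus minus by (auto simp: minimizer_def)
  ultimately have "(\<Prod>i<k. p i) ^ 2 \<le> (\<Prod>i<k. perturb p v e i) * (\<Prod>i<k. perturb p v (- e) i)"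
    unfolding power2_eq_square by (intro mult_mono) auto
  moreover have "(\<Prod>i<k. perturb p v e i) * (\<Prod>i<k. perturb p v (- e) i) < (\<Prod>i<k. p i) ^ 2"
    using A_seq_pos[OF plus g] A_seq_pos[OF minus g] k assms(7,8)
    by (intro prod_perturb_pair_less) auto
  ultimately show False by simp
qed

lemma minimizer_tail:
  assumes min: "minimizer g (Suc n) k p" and g: "1 \<le> g" and n: "1 \<le> n" and k: "1 \<le> k"
    and tight: "p 0 = real g * (\<Sum>i\<in>{1..<Suc n}. p i)"
  shows "p 0 = 1 / (real g + 1)" "minimizer (g * (g + 1)) n (k - 1) (\<lambda>i. p (Suc i))"
proof -
  have p: "A_seq g (Suc n) p" using min by (simp add: minimizer_def)
  show p0: "p 0 = 1 / (real g + 1)" using A_seq_tail[OF p g n tight] by simp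
  obtain k' where k': "k = Suc k'" using k by (cases k) auto
  have "(\<Prod>i<k'. p (Suc i)) \<le> (\<Prod>i<k'. q i)" if q: "A_seq (g * (g + 1)) n q" for q
  proof -
    have "(\<Prod>i<Suc k'. p i) \<le> (\<Prod>i<Suc k'. case_nat (1 / (real g + 1)) q i)"
      using min A_seq_Cons[OF q g n] unfolding minimizer_def k' by blast
    then have "p 0 * (\<Prod>i<k'. p (Suc i)) \<le> 1 / (real g + 1) * (\<Prod>i<k'. q i)"
      by (simp only: prod.lessThan_Suc_shift nat.case)
    moreover have "0 < real g + 1" by simp
    ultimately show ?thesis unfolding p0 by (simp add: divide_le_cancel)
  qed
  then show "minimizer (g * (g + 1)) n (k - 1) (\<lambda>i. p (Suc i))"
    using A_seq_tail[OF p g n tight] k' by (simp add: minimizer_def)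
qed

locale nonuniform_minimizer =
  fixes g n k :: nat and p :: "nat \<Rightarrow> real"
  assumes minimizer: "minimizer g n k p" and g: "1 \<le> g" and k: "1 \<le> k" "k \<le> n"
    and nonuniform: "p (n - 1) < p 0"
begin

lemma A_seq_p: "A_seq g n p"
  using minimizer by (simp add: minimizer_def)

lemma not_less_min: "A_seq g n q \<Longrightarrow> \<not> (\<Prod>i<k. q i) < (\<Prod>i<k. p i)"
  using minimizer by (auto simp: minimizer_def not_less)

lemma two_le_n: "2 \<le> n"
  using nonuniform by (cases "n \<le> 1") (auto simp: le_Suc_eq)

lemma pos: "i < n \<Longrightarrow> 0 < p i"
  using A_seq_pos[OF A_seq_p g] .

lemma antimono: "i \<le> j \<Longrightarrow> j < n \<Longrightarrow> p j \<le> p i"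
  using A_seq_antimono[OF A_seq_p] .

definition first_drop :: nat where
  "first_drop = (LEAST i. p i < p 0)"

definition last_start :: nat where
  "last_start = (LEAST i. p i = p (n - 1))"

lemma first_drop: "p first_drop < p 0" "first_drop \<le> n - 1"
  unfolding first_drop_def using nonuniform by (auto intro: LeastI Least_le)

lemma before_first_drop: "i < first_drop \<Longrightarrow> p i = p 0"
  using not_less_Least[of i "\<lambda>i. p i < p 0"] antimono[of 0 i] first_drop two_le_n
  unfolding first_drop_def by fastforce

lemma last_start: "p last_start = p (n - 1)" "last_start \<le> n - 1"
  unfolding last_start_def by (auto intro: LeastI Least_le)

lemma last_start_less_n: "last_start < n"
  using last_start(2) two_le_n by linarith

lemma before_last_start: "i < last_start \<Longrightarrow> p (n - 1) < p i"
  using not_less_Least[of i "\<lambda>i. p i = p (n - 1)"] antimono[of i "n - 1"] last_start two_le_n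
  unfolding last_start_def by fastforce

lemma from_last_start: "last_start \<le> i \<Longrightarrow> i < n \<Longrightarrow> p i = p (n - 1)"
  using antimono[of last_start i] antimono[of i "n - 1"] last_start by simp

lemma first_drop_pos: "1 \<le> first_drop"
  using first_drop(1) by (cases first_drop) auto

lemma first_drop_le_last_start: "first_drop \<le> last_start"
  unfolding first_drop_def using last_start(1) nonuniform by (intro Least_le) simp

lemma last_start_pos: "1 \<le> last_start"
  using first_drop_pos first_drop_le_last_start by simp

lemma sum_from_last_start:
  "last_start \<le> j \<Longrightarrow> (\<Sum>i\<in>{j..<n}. p i) = real (n - j) * p (n - 1)"
  using from_last_start by simp

lemma slack_beyond_last_start:
  assumes "last_start < j" "j \<le> n - 1"
  shows "(\<Prod>i<j. p i) < real g * (\<Sum>i\<in>{j..<n}. p i)"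
proof -
  define c where "c = p (n - 1)"
  have c: "0 < c" unfolding c_def using pos two_le_n by simp
  have "real (n - last_start) * c = (\<Sum>i\<in>{last_start..<n}. p i)"
    unfolding c_def using sum_from_last_start by simp
  also have "\<dots> < (\<Sum>i<n. p i)"
    using pos first_drop_pos first_drop_le_last_start two_le_n
    by (intro sum_strict_mono2[where b = 0]) (auto intro: less_imp_le)
  also have "\<dots> \<le> 1" using A_seq_p g by (simp add: A_seq_def)
  finally have short: "real (n - last_start) * c < 1" .
  have "(\<Prod>i<j. p i) \<le> (\<Prod>i<Suc last_start. p i)"
    using assms pos A_seq_le_1[OF A_seq_p g] by (intro prod_lessThan_antimono) (auto intro: less_imp_le)
  also have "\<dots> = (\<Prod>i<last_start. p i) * c"
    unfolding c_def using last_start by simp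
  also have "\<dots> \<le> real g * (real (n - last_start) * c) * c"
    using A_seq_constraint[OF A_seq_p last_start_pos last_start(2)] c sum_from_last_start[of last_start]
    by (intro mult_right_mono) (auto simp: c_def)
  also have "\<dots> < real g * c"
    using short c g by simp
  also have "\<dots> \<le> real g * (real (n - j) * c)"
    using assms c by (intro mult_left_mono) auto
  finally show ?thesis using sum_from_last_start[of j] assms by (simp add: c_def)
qed

definition plateau_shift :: "nat \<Rightarrow> real" where
  "plateau_shift i = (if i < first_drop then 1 / real first_drop
     else if last_start \<le> i then - 1 / real (n - last_start) else 0)"

lemma sum_plateau_shift: "(\<Sum>i<n. plateau_shift i) = 0"
proof -
  have "(\<Sum>i<n. plateau_shift i) = (\<Sum>i<first_drop. plateau_shift i)
      + (\<Sum>i\<in>{first_drop..<last_start}. plateau_shift i) + (\<Sum>i\<in>{last_start..<n}. plateau_shift i)"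
    using first_drop_le_last_start last_start_less_n sum.atLeastLessThan_concat[of 0 first_drop last_start plateau_shift]
      sum.atLeastLessThan_concat[of 0 last_start n plateau_shift]
    by (simp add: atLeast0LessThan)
  also have "\<dots> = 1 + 0 + (- 1)"
    using first_drop_pos first_drop_le_last_start last_start two_le_n by (simp add: plateau_shift_def)
  finally show ?thesis by simp
qed

lemma plateau_shift_on_plateau:
  assumes "i + 1 < n" "p (i + 1) = p i"
  shows "plateau_shift (i + 1) = plateau_shift i"
proof -
  have "i + 1 \<noteq> first_drop" using before_first_drop[of i] first_drop(1) assms(2) by auto
  moreover have "i + 1 \<noteq> last_start" using before_last_start[of i] last_start(1) assms(2) by auto
  ultimately show ?thesis by (auto simp: plateau_shift_def)
qed

lemma sum_plateau_shift_from_le_0: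
  assumes "j \<le> last_start"
  shows "(\<Sum>i\<in>{j..<n}. plateau_shift i) \<le> 0"
proof -
  have "(\<Sum>i<n. plateau_shift i) = (\<Sum>i<j. plateau_shift i) + (\<Sum>i\<in>{j..<n}. plateau_shift i)"
    using assms last_start_less_n sum.atLeastLessThan_concat[of 0 j n plateau_shift] by (simp add: atLeast0LessThan)
  moreover have "0 \<le> (\<Sum>i<j. plateau_shift i)"
    using assms by (intro sum_nonneg) (auto simp: plateau_shift_def)
  ultimately show ?thesis using sum_plateau_shift by simp
qed

lemma perturb_neg_plateau_shift_le: "0 \<le> e \<Longrightarrow> i < last_start \<Longrightarrow> perturb p (\<lambda>i. - plateau_shift i) e i \<le> p i"
  by (simp add: perturb_def plateau_shift_def)

lemma perturb_neg_plateau_shift_constraint: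
  assumes e: "0 < e" and pos_e: "\<And>i. i < n \<Longrightarrow> 0 < perturb p (\<lambda>i. - plateau_shift i) e i"
    and j: "1 \<le> j" "j \<le> last_start"
  shows "(\<Prod>i<j. perturb p (\<lambda>i. - plateau_shift i) e i)
    \<le> real g * (\<Sum>i\<in>{j..<n}. perturb p (\<lambda>i. - plateau_shift i) e i)"
proof -
  have "(\<Prod>i<j. perturb p (\<lambda>i. - plateau_shift i) e i) \<le> (\<Prod>i<j. p i)"
    using pos_e perturb_neg_plateau_shift_le e j last_start_less_n
    by (intro prod_mono) (auto intro: less_imp_le)
  also have "\<dots> \<le> real g * (\<Sum>i\<in>{j..<n}. p i)"
    using A_seq_constraint[OF A_seq_p j(1)] j(2) last_start(2) by simp
  also have "(\<Sum>i\<in>{j..<n}. p i) \<le> (\<Sum>i\<in>{j..<n}. perturb p (\<lambda>i. - plateau_shift i) e i)"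
  proof -
    have "(\<Sum>i\<in>{j..<n}. perturb p (\<lambda>i. - plateau_shift i) e i)
        = (\<Sum>i\<in>{j..<n}. p i) - e * (\<Sum>i\<in>{j..<n}. plateau_shift i)"
      by (simp add: perturb_def sum_subtractf sum_distrib_left)
    then show ?thesis
      using mult_nonneg_nonpos[OF _ sum_plateau_shift_from_le_0[OF j(2)], of e] e by simp
  qed
  finally show ?thesis using g by (simp add: mult_left_mono)
qed

lemma last_start_less_k: "last_start < k"
proof (rule ccontr)
  assume "\<not> last_start < k"
  have "\<forall>\<^sub>F e in at_right 0. 0 < e \<and> A_seq g n (perturb p (\<lambda>i. - plateau_shift i) e)"
  proof (rule eventually_A_seq_perturb[OF A_seq_p])
    fix e :: real and j
    assume e: "0 < e" and pos_e: "\<And>i. i < n \<Longrightarrow> 0 < perturb p (\<lambda>i. - plateau_shift i) e i"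
      and j: "1 \<le> j" "j \<le> n - 1" and tight: "(\<Prod>i<j. p i) = real g * (\<Sum>i\<in>{j..<n}. p i)"
    have "j \<le> last_start"
      using slack_beyond_last_start[of j] j tight by (cases "last_start < j") auto
    then show "(\<Prod>i<j. perturb p (\<lambda>i. - plateau_shift i) e i)
      \<le> real g * (\<Sum>i\<in>{j..<n}. perturb p (\<lambda>i. - plateau_shift i) e i)"
      using perturb_neg_plateau_shift_constraint[OF e _ j(1)] pos_e by blast
  qed (use two_le_n pos sum_plateau_shift plateau_shift_on_plateau in \<open>auto simp: sum_negf\<close>)
  then obtain e where e: "0 < e" "A_seq g n (perturb p (\<lambda>i. - plateau_shift i) e)"
    using eventually_happens'[OF trivial_limit_at_right_real] by blast
  have "(\<Prod>i<k. perturb p (\<lambda>i. - plateau_shift i) e i) < (\<Prod>i<k. p i)"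
  proof (rule prod_strict_mono_ex1[where j = 0])
    show "perturb p (\<lambda>i. - plateau_shift i) e 0 < p 0"
      using e(1) first_drop_pos by (simp add: perturb_def plateau_shift_def)
  qed (use A_seq_pos[OF e(2) g] perturb_neg_plateau_shift_le e(1) k \<open>\<not> last_start < k\<close> in auto)
  then show False using not_less_min[OF e(2)] by simp
qed

lemma ex_tight_constraint:
  "\<exists>j. 1 \<le> j \<and> j \<le> n - 1 \<and> (\<Prod>i<j. p i) = real g * (\<Sum>i\<in>{j..<n}. p i)"
proof (rule ccontr)
  assume no_tight: "\<nexists>j. 1 \<le> j \<and> j \<le> n - 1 \<and> (\<Prod>i<j. p i) = real g * (\<Sum>i\<in>{j..<n}. p i)"
  have "\<forall>\<^sub>F e in at_right 0. 0 < e \<and> A_seq g n (perturb p plateau_shift e)"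
    by (rule eventually_A_seq_perturb[OF A_seq_p])
      (use two_le_n pos sum_plateau_shift plateau_shift_on_plateau no_tight in auto)
  moreover have "\<forall>\<^sub>F e in at_right 0. 0 < e \<and> A_seq g n (perturb p (\<lambda>i. - plateau_shift i) e)"
    by (rule eventually_A_seq_perturb[OF A_seq_p])
      (use two_le_n pos sum_plateau_shift plateau_shift_on_plateau no_tight in \<open>auto simp: sum_negf\<close>)
  ultimately have "\<forall>\<^sub>F e in at_right 0. (0 < e \<and> A_seq g n (perturb p plateau_shift e))
      \<and> (0 < e \<and> A_seq g n (perturb p (\<lambda>i. - plateau_shift i) e))"
    by (rule eventually_conj)
  then obtain e where e: "0 < e" and plus: "A_seq g n (perturb p plateau_shift e)"
    and minus: "A_seq g n (perturb p plateau_shift (- e))"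
    using eventually_happens'[OF trivial_limit_at_right_real] by (auto simp: perturb_uminus)
  have "plateau_shift 0 \<noteq> 0" using first_drop_pos by (simp add: plateau_shift_def)
  then show False
    using minimizer_two_sided_perturb[OF minimizer g _ k(2) plus minus] k e by simp
qed

lemma prod_perturb_transfer_less:
  assumes "0 < e" "2 \<le> m" "m \<le> j" "j \<le> n"
  shows "(\<Prod>i<j. perturb p (transfer 0 (m - 1)) e i) < (\<Prod>i<j. p i)"
proof -
  have "0 \<noteq> m - 1" using assms(2) by simp
  then show ?thesis
    unfolding perturb_transfer[OF \<open>0 \<noteq> m - 1\<close>] using assms pos antimono[of 0 "m - 1"]
    by (intro prod_spread_less) auto
qed

lemma eventually_A_seq_transfer:
  assumes m: "2 \<le> m" "m \<le> n - 1" and drop: "p m < p (m - 1)"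
    and slack: "\<And>j. 1 \<le> j \<Longrightarrow> j < m \<Longrightarrow> (\<Prod>i<j. p i) < real g * (\<Sum>i\<in>{j..<n}. p i)"
  shows "\<forall>\<^sub>F e in at_right 0. 0 < e \<and> A_seq g n (perturb p (transfer 0 (m - 1)) e)"
proof (rule eventually_A_seq_perturb[OF A_seq_p])
  fix e :: real and j
  assume e: "0 < e" and j: "1 \<le> j" "j \<le> n - 1"
    and tight: "(\<Prod>i<j. p i) = real g * (\<Sum>i\<in>{j..<n}. p i)"
  then have "m \<le> j" using slack[of j] by (cases "j < m") auto
  then have "(\<Prod>i<j. perturb p (transfer 0 (m - 1)) e i) \<le> real g * (\<Sum>i\<in>{j..<n}. p i)"
    using prod_perturb_transfer_less[OF e m(1), of j] tight j by force
  also have "(\<Sum>i\<in>{j..<n}. p i) = (\<Sum>i\<in>{j..<n}. perturb p (transfer 0 (m - 1)) e i)"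
    using \<open>m \<le> j\<close> m by (intro sum.cong) (auto simp: perturb_def transfer_def)
  finally show "(\<Prod>i<j. perturb p (transfer 0 (m - 1)) e i)
    \<le> real g * (\<Sum>i\<in>{j..<n}. perturb p (transfer 0 (m - 1)) e i)" .
next
  fix i
  assume "i + 1 < n" "p (i + 1) = p i"
  moreover have "m - 1 + 1 = m" using m by simp
  ultimately have "i \<noteq> m - 1" using drop by auto
  then show "transfer 0 (m - 1) (i + 1) \<le> transfer 0 (m - 1) i" by (simp add: transfer_def)
qed (use m two_le_n pos sum_transfer in auto)

lemma no_tight_constraint_after_slack_first:
  assumes slack1: "p 0 < real g * (\<Sum>i\<in>{1..<n}. p i)"
    and m: "1 \<le> m" "m \<le> n - 1" and tight: "(\<Prod>i<m. p i) = real g * (\<Sum>i\<in>{m..<n}. p i)"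
    and slack: "\<And>j. 1 \<le> j \<Longrightarrow> j < m \<Longrightarrow> (\<Prod>i<j. p i) < real g * (\<Sum>i\<in>{j..<n}. p i)"
  shows False
proof -
  have "2 \<le> m" using slack1 tight m by (cases "m = 1") auto
  have "m \<le> last_start" using slack_beyond_last_start[of m] tight m by (cases "last_start < m") auto
  have "p m < p (m - 1)"
    using A_seq_drop_at_first_tight[OF A_seq_p g \<open>2 \<le> m\<close> _ _ tight] slack[of "m - 1"] \<open>2 \<le> m\<close> m(2)
      two_le_n by simp
  then obtain e where e: "0 < e" "A_seq g n (perturb p (transfer 0 (m - 1)) e)"
    using eventually_happens'[OF trivial_limit_at_right_real
        eventually_A_seq_transfer[OF \<open>2 \<le> m\<close> m(2) _ slack]] by blast
  have "(\<Prod>i<k. perturb p (transfer 0 (m - 1)) e i) < (\<Prod>i<k. p i)"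
    using prod_perturb_transfer_less[OF e(1) \<open>2 \<le> m\<close>] \<open>m \<le> last_start\<close> last_start_less_k k(2)
    by simp
  then show False using not_less_min[OF e(2)] by simp
qed

lemma first_constraint_tight: "p 0 = real g * (\<Sum>i\<in>{1..<n}. p i)"
proof (rule ccontr)
  assume "p 0 \<noteq> real g * (\<Sum>i\<in>{1..<n}. p i)"
  moreover have "1 \<le> n - 1" using two_le_n by simp
  ultimately have slack1: "p 0 < real g * (\<Sum>i\<in>{1..<n}. p i)"
    using A_seq_constraint[OF A_seq_p order.refl] by simp
  define tight where
    "tight j \<longleftrightarrow> 1 \<le> j \<and> j \<le> n - 1 \<and> (\<Prod>i<j. p i) = real g * (\<Sum>i\<in>{j..<n}. p i)" for j
  have "\<exists>j. tight j" using ex_tight_constraint unfolding tight_def .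
  then obtain m where "tight m" and least: "\<And>j. j < m \<Longrightarrow> \<not> tight j"
    using exists_least_iff[THEN iffD1] by blast
  then have m: "1 \<le> m" "m \<le> n - 1" "(\<Prod>i<m. p i) = real g * (\<Sum>i\<in>{m..<n}. p i)"
    unfolding tight_def by simp_all
  have slack: "(\<Prod>i<j. p i) < real g * (\<Sum>i\<in>{j..<n}. p i)" if "1 \<le> j" "j < m" for j
  proof -
    have "j \<le> n - 1" using that m by simp
    then have "(\<Prod>i<j. p i) \<le> real g * (\<Sum>i\<in>{j..<n}. p i)"
      using A_seq_constraint[OF A_seq_p \<open>1 \<le> j\<close>] by simp
    moreover have "\<not> tight j" using least \<open>j < m\<close> .
    ultimately show ?thesis using that \<open>j \<le> n - 1\<close> unfolding tight_def by simp
  qed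
  show False by (rule no_tight_constraint_after_slack_first[OF slack1 m slack])
qed

end

lemma minimizer_eq_y:
  assumes "minimizer g n k p" "1 \<le> g" "1 \<le> k" "k \<le> n"
  shows "\<exists>i. 1 \<le> i \<and> i \<le> k \<and> map p [0..<n] = y g n i"
  using assms
proof (induction n arbitrary: g k p)
  case 0
  then show ?case by simp
next
  case (Suc n)
  then have p: "A_seq g (Suc n) p" by (simp add: minimizer_def)
  show ?case
  proof (cases "p n < p 0")
    case False
    then have "map p [0..<Suc n] = y g (Suc n) 1"
      using A_seq_uniform[OF p] A_seq_antimono[OF p, of 0 n] by simp
    then show ?thesis using Suc.prems by auto
  next
    case True
    then interpret nonuniform_minimizer g "Suc n" k p
      using Suc.prems by unfold_locales auto
    have "1 \<le> n" "2 \<le> k" using two_le_n last_start_pos last_start_less_k by simp_all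
    note tail = minimizer_tail[OF minimizer g \<open>1 \<le> n\<close> k(1) first_constraint_tight]
    have "1 \<le> g * (g + 1)" "1 \<le> k - 1" "k - 1 \<le> n" using g \<open>2 \<le> k\<close> k(2) by simp_all
    then obtain i where i: "1 \<le> i" "i \<le> k - 1" "map (\<lambda>i. p (Suc i)) [0..<n] = y (g * (g + 1)) n i"
      using Suc.IH[OF tail(2)] by blast
    have "map p [0..<Suc n] = y g (Suc n) (Suc i)"
      unfolding map_upt_Suc using y_Suc[of i n g] i tail(1) k(2) by simp
    then show ?thesis using i by (intro exI[of _ "Suc i"]) auto
  qed
qed

lemma minimizer_if_min_on_A:
  assumes "1 \<le> n" "k \<le> n" and "map p [0..<n] \<in> A g n"
    and min: "\<forall>z \<in> A g n. f k (map p [0..<n]) \<le> f k z"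
  shows "minimizer g n k p"
  unfolding minimizer_def
proof (intro conjI allI impI)
  show "A_seq g n p" using assms(3) map_upt_in_A_iff[OF assms(1)] by simp
  fix q
  assume "A_seq g n q"
  then have "map q [0..<n] \<in> A g n" using map_upt_in_A_iff[OF assms(1)] by simp
  then show "(\<Prod>i<k. p i) \<le> (\<Prod>i<k. q i)" using min f_map_upt[OF assms(2)] by metis
qed

theorem proposition3p8:
  fixes g n k :: nat and x :: "real list"
  assumes "g \<ge> 1" and "n \<ge> 3" and "1 \<le> k" and "k \<le> n"
    and "x \<in> A g n"
    and "\<forall>z \<in> A g n. f k x \<le> f k z"
  shows "\<exists>i0. 1 \<le> i0 \<and> i0 \<le> k \<and> x = y g n i0"
proof -
  define p where "p i = x ! i" for i
  have "length x = n" using assms(5) by (simp add: A_def)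
  then have x: "x = map p [0..<n]"
    unfolding p_def using map_nth[of x] by simp
  have "1 \<le> n" using assms(2) by simp
  then have "minimizer g n k p"
    using minimizer_if_min_on_A assms(4-6) unfolding x by blast
  then obtain i where "1 \<le> i" "i \<le> k" "map p [0..<n] = y g n i"
    using minimizer_eq_y assms(1,3,4) by blast
  then show ?thesis using x by blast
qed

end
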